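(* Let $d\ge1$ and let $X\cong\mathbb{P}^d$ be the projective space of effective divisors of degree $d$ on $\mathbb{P}^1$, with the natural action of $G=PGL(2,\mathbb{C})$. For any two nonempty projective linear subspaces $V,W\subseteq X$ there exists $g\in G$ such that $V$ and $gW$ meet properly, i.e. $\dim(V\cap gW)=\max\{-1,\dim V+\dim W-d\}$.
   Context: Dimension $-1$ means empty intersection. *)

theory Defs
  imports "HOL-Computational_Algebra.Polynomial"
begin

text \<open>The projective space X of effective divisors of degree d on P^1 is the
projectivisation of the (d+1)-dimensional complex vector space of binary forms of
degree d.  A binary form sum_k a_k x^k y^(d-k) is encoded by its dehomogenisation,
the univariate polynomial sum_k a_k x^k of degree at most d.\<close>

definition forms :: "nat \<Rightarrow> complex poly set" where
  "forms d = {p. degree p \<le> d}"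

text \<open>Projective linear subspaces of X = nonzero linear subspaces of forms d.\<close>
definition lin_subspace :: "nat \<Rightarrow> complex poly set \<Rightarrow> bool" where
  "lin_subspace d V \<longleftrightarrow> V \<subseteq> forms d \<and> 0 \<in> V \<and>
     (\<forall>p\<in>V. \<forall>q\<in>V. p + q \<in> V) \<and> (\<forall>c. \<forall>p\<in>V. smult c p \<in> V)"

definition nonempty_proj_subspace :: "nat \<Rightarrow> complex poly set \<Rightarrow> bool" where
  "nonempty_proj_subspace d V \<longleftrightarrow> lin_subspace d V \<and> V \<noteq> {0}"

lemma vector_space_smult: "vector_space (smult :: complex \<Rightarrow> complex poly \<Rightarrow> complex poly)"
  by unfold_locales (auto simp: smult_add_right smult_add_left)

text \<open>Projective dimension: vector space dimension minus one (so -1 = empty).\<close>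
definition pdim :: "complex poly set \<Rightarrow> int" where
  "pdim V = int (vector_space.dim (smult :: complex \<Rightarrow> complex poly \<Rightarrow> complex poly) V) - 1"

text \<open>Action of an invertible matrix g = [[a,b],[c,e]] on binary forms of degree d:
f(x,y) is sent to f(a x + b y, c x + e y).  Scalar matrices act by scalars,
so this induces the natural action of PGL(2,C) on X.\<close>
definition act :: "nat \<Rightarrow> complex \<times> complex \<times> complex \<times> complex \<Rightarrow> complex poly \<Rightarrow> complex poly" where
  "act d g p = (case g of (a, b, c, e) \<Rightarrow>
     (\<Sum>k\<le>d. smult (coeff p k) ([:b, a:] ^ k * [:e, c:] ^ (d - k))))"

definition invertible2 :: "complex \<times> complex \<times> complex \<times> complex \<Rightarrow> bool" where
  "invertible2 g = (case g of (a, b, c, e) \<Rightarrow> a * e - b * c \<noteq> 0)"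

end

theory Submission
  imports Defs
begin

(* Call r generic
   for a subspace V if no nonzero element of V vanishes to order dim V at r; a Wronskian
   argument shows that all but finitely many points are generic.  In Taylor coordinates at r,
   the substitution x |-> s + t / (x - r) sends the k-th Taylor coefficient of q at s to the
   (d - k)-th Taylor coefficient of its image at r, scaled by t^k.  So if dim V + dim W <= d + 1,
   r is generic for V and s for W, then for small t the image of W lives essentially in the
   top dim W coefficients at r, where no element of V can live: a norm estimate shows that V
   meets the image only in 0.  If dim V + dim W > d + 1, apply this to a subspace of W of
   dimension d + 1 - dim V, which then spans a complement of V, and conclude by the modular law. *)

context vector_space
begin

lemma subspace_finite_basis:
  assumes "subspace V" "finite B" "V \<subseteq> span B"
  obtains C where "C \<subseteq> V" "independent C" "span C = V" "finite C" "card C = dim V"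
proof -
  obtain C where C: "C \<subseteq> V" "independent C" "V \<subseteq> span C" "card C = dim V"
    using basis_exists by blast
  moreover have "span C = V"
    using C assms(1) span_minimal[of C V] by auto
  moreover have "finite C"
    using independent_span_bound[OF assms(2) C(2)] C(1) assms(3) by blast
  ultimately show thesis using that by blast
qed

lemma subspace_eq_of_dim_le:
  assumes "subspace S" "subspace T" "S \<subseteq> T" "finite B" "T \<subseteq> span B" "dim T \<le> dim S"
  shows "S = T"
proof -
  obtain C where C: "C \<subseteq> S" "independent C" "span C = S" "finite C" "card C = dim S"
    using subspace_finite_basis[OF assms(1,4)] assms(3,5) by (metis order_trans)
  obtain D where D: "D \<subseteq> T" "span D = T" "finite D" "card D = dim T"
    using subspace_finite_basis[OF assms(2,4,5)] by metis
  have "T \<subseteq> S"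
  proof
    fix x assume "x \<in> T"
    show "x \<in> S"
    proof (rule ccontr)
      assume "x \<notin> S"
      then have "independent (insert x C)" and "x \<notin> C"
        using independent_insertI[of x C] C(1-3) by auto
      moreover have "insert x C \<subseteq> span D"
        using \<open>x \<in> T\<close> C(1) assms(3) D(2) by auto
      ultimately have "card (insert x C) \<le> card D"
        using independent_span_bound[OF D(3)] by blast
      then show False
        using \<open>x \<notin> C\<close> C(4,5) D(4) assms(6) by simp
    qed
  qed
  then show ?thesis using assms(3) by blast
qed

lemma dim_Un_direct:
  assumes "subspace A" "subspace C" "A \<inter> C \<subseteq> {0}" "finite B" "A \<union> C \<subseteq> span B"
  shows "dim (A \<union> C) = dim A + dim C"
proof -
  obtain BA where BA: "BA \<subseteq> A" "independent BA" "span BA = A" "finite BA" "card BA = dim A"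
    using subspace_finite_basis[OF assms(1,4)] assms(5) by (metis le_sup_iff)
  obtain BC where BC: "BC \<subseteq> C" "independent BC" "span BC = C" "finite BC" "card BC = dim C"
    using subspace_finite_basis[OF assms(2,4)] assms(5) by (metis le_sup_iff)
  have disj: "BA \<inter> BC = {}"
    using BA(1,2) BC(1) assms(3) dependent_zero by blast
  have "independent (BA \<union> BC)"
  proof (rule independent_if_scalars_zero)
    show "finite (BA \<union> BC)" using BA(4) BC(4) by simp
  next
    fix f x assume sum0: "(\<Sum>x\<in>BA \<union> BC. scale (f x) x) = 0" and x: "x \<in> BA \<union> BC"
    define a where "a = (\<Sum>x\<in>BA. scale (f x) x)"
    define c where "c = (\<Sum>x\<in>BC. scale (f x) x)"
    have "a \<in> A" "c \<in> C"
      unfolding a_def c_def BA(3)[symmetric] BC(3)[symmetric] by (auto intro: span_sum span_scale span_base)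
    moreover have "a = - c"
      using sum0 unfolding a_def c_def sum.union_disjoint[OF BA(4) BC(4) disj]
      by (simp add: eq_neg_iff_add_eq_0)
    ultimately have "a = 0" "c = 0"
      using assms(2,3) subspace_neg by fastforce+
    then show "f x = 0"
      using x independentD[OF BA(2,4) order_refl] independentD[OF BC(2,4) order_refl]
      unfolding a_def c_def by blast
  qed
  moreover have "span (BA \<union> BC) = span (A \<union> C)"
    unfolding BA(3)[symmetric] BC(3)[symmetric] span_Un span_span ..
  ultimately have "dim (A \<union> C) = card (BA \<union> BC)"
    using dim_eq_card by metis
  then show ?thesis
    using card_Un_disjoint[OF BA(4) BC(4) disj] BA(5) BC(5) by simp
qed

text \<open>The modular law \<open>U = (V \<inter> U) \<oplus> U'\<close>, counted in dimensions.\<close>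

lemma dim_Int_add_dim_complement:
  assumes "subspace V" "subspace U" "subspace U'" "U' \<subseteq> U" "V \<inter> U' \<subseteq> {0}"
    and "U \<subseteq> span (V \<union> U')" "finite B" "U \<subseteq> span B"
  shows "dim (V \<inter> U) + dim U' = dim U"
proof -
  have "span ((V \<inter> U) \<union> U') = U"
  proof (intro antisym)
    show "span ((V \<inter> U) \<union> U') \<subseteq> U"
      using assms(2,4) span_minimal[of "(V \<inter> U) \<union> U'" U] by blast
    show "U \<subseteq> span ((V \<inter> U) \<union> U')"
    proof
      fix u assume u: "u \<in> U"
      obtain a b where ab: "u = a + b" "a \<in> V" "b \<in> U'"
        using u assms(6) unfolding span_Un span_eq_iff[THEN iffD2, OF assms(1)]
          span_eq_iff[THEN iffD2, OF assms(3)] by blast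
      then have "a \<in> U"
        using u assms(2,4) subspace_diff[of U u b] by auto
      then show "u \<in> span ((V \<inter> U) \<union> U')"
        using ab span_add[of a _ b] span_base[of _ "(V \<inter> U) \<union> U'"] by auto
    qed
  qed
  moreover have "dim ((V \<inter> U) \<union> U') = dim (V \<inter> U) + dim U'"
    using assms by (intro dim_Un_direct[where B = B]) (auto intro: subspace_inter)
  ultimately show ?thesis using dim_span by metis
qed

lemma dim_Int_add_dim_complement_of_dim_le:
  assumes "subspace V" "subspace U" "subspace U'" "U' \<subseteq> U" "V \<inter> U' \<subseteq> {0}"
    and "subspace T" "V \<union> U \<subseteq> T" "finite B" "T \<subseteq> span B" "dim T \<le> dim V + dim U'"
  shows "dim (V \<inter> U) + dim U' = dim U"
proof -
  have "V \<union> U' \<subseteq> T"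
    using assms(4,7) by blast
  have "dim (V \<union> U') = dim V + dim U'"
    using dim_Un_direct[OF assms(1,3,5,8)] \<open>V \<union> U' \<subseteq> T\<close> assms(9) by blast
  then have "span (V \<union> U') = T"
    using assms(10)
    by (intro subspace_eq_of_dim_le[OF subspace_span assms(6) span_minimal[OF \<open>V \<union> U' \<subseteq> T\<close> assms(6)]
          assms(8,9)]) simp
  then show ?thesis
    using assms(7,9) by (intro dim_Int_add_dim_complement[OF assms(1-5) _ assms(8)]) auto
qed

lemma dim_image_eq_of_inj_on:
  assumes "Vector_Spaces.linear scale scale f" "subspace V" "inj_on f V" "finite B" "V \<subseteq> span B"
  shows "dim (f ` V) = dim V"
proof -
  interpret f: Vector_Spaces.linear scale scale f by fact
  obtain C where C: "C \<subseteq> V" "independent C" "span C = V" "card C = dim V"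
    using subspace_finite_basis[OF assms(2,4,5)] by metis
  have "independent (f ` C)"
    using f.independent_injective_image[OF C(2)] assms(3) C(3) by simp
  moreover have "span (f ` C) = span (f ` V)"
    using f.span_image[of C] f.subspace_image[OF assms(2)] C(3) by (metis span_eq_iff)
  ultimately have "dim (f ` V) = card (f ` C)"
    using dim_eq_card by metis
  then show ?thesis
    using card_image[OF inj_on_subset[OF assms(3) C(1)]] C(4) by simp
qed

lemma subspace_with_dim:
  assumes "subspace W" "finite B" "W \<subseteq> span B" "n \<le> dim W"
  obtains W' where "subspace W'" "W' \<subseteq> W" "dim W' = n"
proof -
  obtain C where C: "C \<subseteq> W" "independent C" "card C = dim W"
    using subspace_finite_basis[OF assms(1-3)] by metis
  obtain C' where C': "C' \<subseteq> C" "card C' = n"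
    using obtain_subset_with_card_n assms(4) C(3) by (metis)
  show thesis
  proof (rule that)
    show "span C' \<subseteq> W"
      using C(1) C'(1) assms(1) span_minimal by blast
    show "dim (span C') = n"
      using dim_span_eq_card_independent[OF independent_mono[OF C(2) C'(1)]] C'(2) by simp
  qed simp
qed

end

definition taylor :: "'a::comm_semiring_1 \<Rightarrow> 'a poly \<Rightarrow> 'a poly" where
  "taylor r p = pcompose p [:r, 1:]"

lemma taylor_add: "taylor r (p + q) = taylor r p + taylor r q"
  and taylor_smult: "taylor r (smult c p) = smult c (taylor r p)"
  and taylor_mult: "taylor r (p * q) = taylor r p * taylor r q"
  and taylor_sum: "taylor r (sum f A) = (\<Sum>i\<in>A. taylor r (f i))"
  by (simp_all add: taylor_def pcompose_add pcompose_smult pcompose_mult pcompose_sum)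

lemma taylor_diff: "taylor r (p - q) = taylor r p - taylor r q"
  for p :: "'a::comm_ring_1 poly"
  by (simp add: taylor_def pcompose_diff)

lemma taylor_power: "taylor r (p ^ n) = taylor r p ^ n"
  by (induction n) (simp_all add: taylor_def pcompose_1 pcompose_mult)

lemma taylor_0 [simp]: "taylor r 0 = 0"
  by (simp add: taylor_def)

lemma poly_taylor: "poly (taylor r p) x = poly p (r + x)"
  by (simp add: taylor_def poly_pcompose add.commute)

lemma degree_taylor: "degree (taylor r p) = degree p"
  for p :: "'a::idom poly"
  by (simp add: taylor_def degree_pcompose)

lemma taylor_taylor_uminus: "taylor (- r) (taylor r p) = p"
  for p :: "'a::comm_ring_1 poly"
  by (simp add: taylor_def pcompose_assoc[symmetric] pcompose_pCons)

lemma taylor_eq_0_iff [simp]: "taylor r p = 0 \<longleftrightarrow> p = 0"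
  for p :: "'a::comm_ring_1 poly"
  by (metis taylor_taylor_uminus taylor_def pcompose_0)

lemma poly_eqI_nonzero:
  fixes p q :: "'a::{idom, ring_char_0} poly"
  assumes "\<And>x. x \<noteq> 0 \<Longrightarrow> poly p x = poly q x"
  shows "p = q"
proof (rule ccontr)
  assume "p \<noteq> q"
  then have "finite {x. poly (p - q) x = 0}"
    by (intro poly_roots_finite) simp
  moreover have "UNIV - {0} \<subseteq> {x. poly (p - q) x = 0}"
    using assms by auto
  ultimately show False
    using infinite_remove[OF infinite_UNIV_char_0, of 0] finite_subset by blast
qed

lemma poly_eq_sum_upto: "degree p \<le> n \<Longrightarrow> poly p x = (\<Sum>k\<le>n. coeff p k * x ^ k)"
  for p :: "'a::comm_semiring_1 poly"
  by (subst poly_as_sum_of_monoms'[symmetric, of p n]) (simp_all add: poly_sum poly_monom)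

lemma linear_power_dvd_iff_taylor:
  "[:- r, 1:] ^ n dvd p \<longleftrightarrow> (\<forall>k<n. coeff (taylor r p) k = 0)"
  for p :: "'a::comm_ring_1 poly"
proof -
  have shift: "taylor r ([:- r, 1:] ^ n) = monom 1 n"
    by (simp add: taylor_power monom_altdef, simp add: taylor_def pcompose_pCons)
  have "[:- r, 1:] ^ n dvd p \<longleftrightarrow> monom 1 n dvd taylor r p"
  proof
    assume "[:- r, 1:] ^ n dvd p"
    then show "monom 1 n dvd taylor r p"
      by (metis dvd_def shift taylor_mult)
  next
    assume "monom 1 n dvd taylor r p"
    then obtain u where "taylor r p = monom 1 n * u" by (auto elim: dvdE)
    then have "p = taylor (- r) (monom 1 n) * taylor (- r) u"
      by (metis taylor_mult taylor_taylor_uminus)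
    then show "[:- r, 1:] ^ n dvd p"
      by (metis dvd_triv_left shift taylor_taylor_uminus)
  qed
  then show ?thesis by (simp add: monom_1_dvd_iff')
qed

lemma wronskian_eq_0_imp_smult:
  fixes p p0 :: "'a::field_char_0 poly"
  assumes "p0 \<noteq> 0" and wronskian: "pderiv p * p0 = p * pderiv p0"
  shows "\<exists>c. p = smult c p0"
proof -
  obtain r where r: "poly p0 r \<noteq> 0"
    using ex_new_if_finite[OF infinite_UNIV_char_0 poly_roots_finite[OF assms(1)]] by auto
  define q where "q = p - smult (poly p r / poly p0 r) p0"
  have q_root: "poly q r = 0"
    using r by (simp add: q_def)
  have q_wronskian: "pderiv q * p0 = q * pderiv p0"
    using wronskian by (simp add: q_def pderiv_diff pderiv_smult algebra_simps)
  have "q = 0"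
  proof (rule ccontr)
    assume "q \<noteq> 0"
    have "pderiv q \<noteq> 0"
    proof
      assume "pderiv q = 0"
      then obtain c where "q = [:c:]"
        by (metis degree0_coeffs pderiv_eq_0_iff)
      then show False using q_root \<open>q \<noteq> 0\<close> by simp
    qed
    then have "pderiv p0 \<noteq> 0"
      using q_wronskian assms(1) by auto
    have "order r (pderiv q * p0) = order r (pderiv q)"
      using order_mult[of "pderiv q" p0 r] order_0I[OF r] \<open>pderiv q \<noteq> 0\<close> assms(1) by simp
    also have "\<dots> < order r q"
      using order_pderiv[OF \<open>q \<noteq> 0\<close> q_root] by simp
    also have "\<dots> \<le> order r (q * pderiv p0)"
      using order_mult[of q "pderiv p0" r] \<open>q \<noteq> 0\<close> \<open>pderiv p0 \<noteq> 0\<close> by simp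
    finally show False using q_wronskian by simp
  qed
  then show ?thesis unfolding q_def by auto
qed

lemma wronskian_neq_0:
  fixes p p0 :: "'a::field_char_0 poly"
  assumes "poly p0 r \<noteq> 0" "p \<noteq> 0" "poly p r = 0"
  shows "pderiv p * p0 - p * pderiv p0 \<noteq> 0"
proof
  assume "pderiv p * p0 - p * pderiv p0 = 0"
  moreover have "p0 \<noteq> 0"
    using assms(1) by auto
  ultimately obtain c where "p = smult c p0"
    using wronskian_eq_0_imp_smult[of p0 p] by auto
  then show False
    using assms by simp
qed

lemma linear_power_dvd_wronskian:
  fixes p p0 :: "'a::idom poly"
  assumes "[:- r, 1:] ^ Suc n dvd p"
  shows "[:- r, 1:] ^ n dvd pderiv p * p0 - p * pderiv p0"
proof -
  obtain u where u: "p = [:- r, 1:] ^ Suc n * u"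
    using assms by (auto elim: dvdE)
  have "[:- r, 1:] ^ n dvd [:- r, 1:] ^ Suc n * pderiv u"
    by (rule dvd_mult2[OF le_imp_power_dvd]) simp
  then have "[:- r, 1:] ^ n dvd pderiv p"
    unfolding u lemma_order_pderiv1 by (intro dvd_add dvd_smult) (simp_all only: dvd_triv_right)
  moreover have "[:- r, 1:] ^ n dvd p"
    by (rule dvd_trans[OF le_imp_power_dvd assms]) simp
  ultimately show ?thesis
    by (simp add: dvd_diff)
qed

interpretation cpoly: vector_space "smult :: complex \<Rightarrow> complex poly \<Rightarrow> complex poly"
  by (rule vector_space_smult)

lemma subspace_if_lin_subspace: "lin_subspace d V \<Longrightarrow> cpoly.subspace V"
  unfolding lin_subspace_def cpoly.subspace_def by auto

lemma subspace_forms: "cpoly.subspace (forms d)"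
  unfolding cpoly.subspace_def forms_def
  by (auto intro: order_trans[OF degree_add_le] order_trans[OF degree_smult_le])

lemma forms_subset_span_monoms: "forms d \<subseteq> cpoly.span ((\<lambda>k. monom 1 k) ` {..d})"
proof
  fix p assume "p \<in> forms d"
  then have "p = (\<Sum>k\<le>d. smult (coeff p k) (monom 1 k))"
    using poly_as_sum_of_monoms'[of p d] by (simp add: forms_def smult_monom)
  also have "\<dots> \<in> cpoly.span ((\<lambda>k. monom 1 k) ` {..d})"
    by (intro cpoly.span_sum cpoly.span_scale cpoly.span_base) auto
  finally show "p \<in> cpoly.span ((\<lambda>k. monom 1 k) ` {..d})" .
qed

lemma dim_le_if_subset_forms:
  assumes "V \<subseteq> forms d"
  shows "cpoly.dim V \<le> Suc d"
proof -
  have "cpoly.dim V \<le> card ((\<lambda>k. monom (1::complex) k) ` {..d})"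
    using assms forms_subset_span_monoms[of d] by (intro cpoly.dim_le_card) auto
  also have "\<dots> \<le> Suc d"
    using card_image_le[of "{..d}" "\<lambda>k. monom (1::complex) k"] by simp
  finally show ?thesis .
qed

lemma finite_high_order_zeros:
  assumes "cpoly.subspace V" "finite B" "card B \<le> n" "V \<subseteq> cpoly.span B"
  shows "finite {r. \<exists>p\<in>V. p \<noteq> 0 \<and> [:- r, 1:] ^ n dvd p}"
  using assms
proof (induction n arbitrary: V B)
  case 0
  then have "V \<subseteq> {0}" by simp
  then show ?case by (auto intro: finite_subset[of _ "{}"])
next
  case (Suc n)
  show ?case
  proof (cases "V \<subseteq> {0}")
    case True
    then show ?thesis by (auto intro: finite_subset[of _ "{}"])
  next
    case False
    then obtain p0 where p0: "p0 \<in> V" "p0 \<noteq> 0" by blast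
    obtain C where C: "p0 \<in> C" "C \<subseteq> V" "cpoly.independent C" "V \<subseteq> cpoly.span C"
      using cpoly.maximal_independent_subset_extend[of "{p0}" V] p0 by auto
    have "finite C \<and> card C \<le> card B"
      using cpoly.independent_span_bound[OF Suc.prems(2) C(3)] C(2) Suc.prems(4) by blast
    then have "finite (C - {p0})" "card (C - {p0}) \<le> n"
      using Suc.prems(3) C(1) by auto
    \<comment> \<open>The Wronskian with \<open>p0\<close> kills \<open>p0\<close> and, away from the roots of \<open>p0\<close>,
      lowers the order of vanishing by one.\<close>
    define D where "D p = pderiv p * p0 - p * pderiv p0" for p
    interpret D: Vector_Spaces.linear smult smult D
      by (simp add: Vector_Spaces.linear_iff vector_space_smult D_def pderiv_add pderiv_smult
          algebra_simps)
    have "D ` V \<subseteq> cpoly.span (D ` C)"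
      using C(4) D.span_image by blast
    also have "D ` C = insert (D p0) (D ` (C - {p0}))"
      using C(1) by blast
    also have "D p0 = 0"
      by (simp add: D_def)
    finally have "finite {r. \<exists>p\<in>D ` V. p \<noteq> 0 \<and> [:- r, 1:] ^ n dvd p}"
      using Suc.IH[OF D.subspace_image[OF Suc.prems(1)], of "D ` (C - {p0})"]
        card_image_le[of "C - {p0}" D] \<open>finite (C - {p0})\<close> \<open>card (C - {p0}) \<le> n\<close>
      by simp
    moreover have "{r. \<exists>p\<in>V. p \<noteq> 0 \<and> [:- r, 1:] ^ Suc n dvd p}
        \<subseteq> {r. \<exists>p\<in>D ` V. p \<noteq> 0 \<and> [:- r, 1:] ^ n dvd p} \<union> {r. poly p0 r = 0}"
    proof clarify
      fix r p assume p: "p \<in> V" "p \<noteq> 0" "[:- r, 1:] ^ Suc n dvd p" and "poly p0 r \<noteq> 0"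
      have "poly p r = 0"
        using p(3) by (metis dvd_mult_left poly_eq_0_iff_dvd power_Suc)
      then show "\<exists>p'\<in>D ` V. p' \<noteq> 0 \<and> [:- r, 1:] ^ n dvd p'"
        using p wronskian_neq_0[OF \<open>poly p0 r \<noteq> 0\<close> p(2)] linear_power_dvd_wronskian[OF p(3)]
        unfolding D_def by blast
    qed
    moreover have "finite {r. poly p0 r = 0}"
      using poly_roots_finite p0(2) by blast
    ultimately show ?thesis
      by (meson finite_UnI finite_subset)
  qed
qed

text \<open>Equivalently, \<open>V\<close> meets the osculating space of codimension \<open>dim V\<close> of the rational
  normal curve at \<open>r\<close> trivially.\<close>

definition generic_point :: "complex poly set \<Rightarrow> complex \<Rightarrow> bool" where
  "generic_point V r \<longleftrightarrow> (\<forall>p\<in>V. [:- r, 1:] ^ cpoly.dim V dvd p \<longrightarrow> p = 0)"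

lemma generic_point_exists:
  assumes "cpoly.subspace V" "V \<subseteq> forms d"
  obtains r where "generic_point V r"
proof -
  obtain C where C: "finite C" "card C = cpoly.dim V" "cpoly.span C = V"
    using cpoly.subspace_finite_basis[OF assms(1) _ order_trans[OF assms(2) forms_subset_span_monoms]]
    by blast
  have "finite {r. \<exists>p\<in>V. p \<noteq> 0 \<and> [:- r, 1:] ^ cpoly.dim V dvd p}"
    using finite_high_order_zeros[OF assms(1) C(1)] C(2,3) by simp
  then obtain r where "r \<notin> {r. \<exists>p\<in>V. p \<noteq> 0 \<and> [:- r, 1:] ^ cpoly.dim V dvd p}"
    using ex_new_if_finite[OF infinite_UNIV_char_0] by blast
  then show thesis
    using that by (auto simp: generic_point_def)
qed

lemma generic_point_taylor_basis:
  assumes "cpoly.subspace V" "V \<subseteq> forms d" "generic_point V r"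
  obtains P where "\<And>k. k < cpoly.dim V \<Longrightarrow> P k \<in> V"
    "\<And>k j. k < cpoly.dim V \<Longrightarrow> j < cpoly.dim V \<Longrightarrow>
      coeff (taylor r (P k)) j = (if j = k then 1 else 0)"
proof -
  define v where "v = cpoly.dim V"
  define L where "L p = (\<Sum>j<v. monom (coeff (taylor r p) j) j)" for p
  have coeff_L: "coeff (L p) j = (if j < v then coeff (taylor r p) j else 0)" for p j
    by (simp add: L_def coeff_sum)
  have "Vector_Spaces.linear smult smult L"
    by (simp add: Vector_Spaces.linear_iff vector_space_smult poly_eq_iff coeff_L
        taylor_add taylor_smult)
  then interpret L: Vector_Spaces.linear smult smult L .
  have "inj_on L V"
    using assms(3) unfolding L.inj_on_iff_eq_0[OF assms(1)]
    by (auto simp: generic_point_def linear_power_dvd_iff_taylor v_def poly_eq_iff coeff_L)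
  then have dim_LV: "cpoly.dim (L ` V) = v"
    unfolding v_def using order_trans[OF assms(2) forms_subset_span_monoms]
    by (intro cpoly.dim_image_eq_of_inj_on[OF L.linear_axioms assms(1)]) auto
  have LV_forms: "L ` V \<subseteq> forms (v - 1)"
    by (auto simp: forms_def coeff_L intro!: degree_le)
  have "\<exists>P\<in>V. L P = monom 1 k" if "k < v" for k
  proof -
    have "L ` V = forms (v - 1)"
      using dim_le_if_subset_forms[of "forms (v - 1)" "v - 1"] dim_LV \<open>k < v\<close>
      by (intro cpoly.subspace_eq_of_dim_le[OF L.subspace_image[OF assms(1)] subspace_forms
            LV_forms _ forms_subset_span_monoms]) auto
    moreover have "monom 1 k \<in> forms (v - 1)"
      using \<open>k < v\<close> by (simp add: forms_def degree_monom_eq)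
    ultimately show ?thesis by (metis imageE)
  qed
  then obtain P where P: "\<And>k. k < v \<Longrightarrow> P k \<in> V \<and> L (P k) = monom 1 k"
    by metis
  show thesis
  proof (rule that)
    fix k j assume "k < cpoly.dim V" "j < cpoly.dim V"
    then show "coeff (taylor r (P k)) j = (if j = k then 1 else 0)"
      using P[of k] coeff_L[of "P k" j] by (auto simp: v_def)
  qed (use P v_def in blast)
qed

lemma taylor_eq_sum_taylor_basis:
  assumes "cpoly.subspace V" "generic_point V r" "p \<in> V"
    and P: "\<And>k. k < cpoly.dim V \<Longrightarrow> P k \<in> V"
      "\<And>k j. k < cpoly.dim V \<Longrightarrow> j < cpoly.dim V \<Longrightarrow>
        coeff (taylor r (P k)) j = (if j = k then 1 else 0)"
  shows "taylor r p = (\<Sum>k<cpoly.dim V. smult (coeff (taylor r p) k) (taylor r (P k)))"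
proof -
  define q where "q = p - (\<Sum>k<cpoly.dim V. smult (coeff (taylor r p) k) (P k))"
  have "q \<in> V"
    unfolding q_def using assms(1,3) P(1)
    by (intro cpoly.subspace_diff cpoly.subspace_sum cpoly.subspace_scale) auto
  moreover have "coeff (taylor r q) j = 0" if "j < cpoly.dim V" for j
    using that by (simp add: q_def taylor_diff taylor_sum taylor_smult coeff_sum P(2) if_distrib
        sum.delta cong: if_cong)
  ultimately have "q = 0"
    using assms(2) by (auto simp: generic_point_def linear_power_dvd_iff_taylor)
  then have "taylor r p = taylor r (\<Sum>k<cpoly.dim V. smult (coeff (taylor r p) k) (P k))"
    unfolding q_def by simp
  also have "\<dots> = (\<Sum>k<cpoly.dim V. smult (coeff (taylor r p) k) (taylor r (P k)))"
    by (simp only: taylor_sum taylor_smult)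
  finally show ?thesis .
qed

lemma taylor_coeff_bound:
  assumes "cpoly.subspace V" "V \<subseteq> forms d" "generic_point V r"
  obtains C where "C \<ge> 0"
    "\<And>p m. p \<in> V \<Longrightarrow>
      cmod (coeff (taylor r p) m) \<le> C * (\<Sum>k<cpoly.dim V. cmod (coeff (taylor r p) k))"
proof -
  obtain P where P: "\<And>k. k < cpoly.dim V \<Longrightarrow> P k \<in> V"
    "\<And>k j. k < cpoly.dim V \<Longrightarrow> j < cpoly.dim V \<Longrightarrow>
      coeff (taylor r (P k)) j = (if j = k then 1 else 0)"
    using generic_point_taylor_basis[OF assms] by metis
  define C where "C = (\<Sum>k<cpoly.dim V. \<Sum>j\<le>d. cmod (coeff (taylor r (P k)) j))"
  have basis_bound: "cmod (coeff (taylor r (P k)) m) \<le> C" if "k < cpoly.dim V" for k m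
  proof -
    have "cmod (coeff (taylor r (P k)) m) \<le> (\<Sum>j\<le>d. cmod (coeff (taylor r (P k)) j))"
    proof (cases "m \<le> d")
      case False
      then have "coeff (taylor r (P k)) m = 0"
        using P(1)[OF that] assms(2) by (intro coeff_eq_0) (auto simp: forms_def degree_taylor)
      then show ?thesis by (simp add: sum_nonneg)
    qed (auto intro: member_le_sum)
    also have "\<dots> \<le> C"
      unfolding C_def using that by (intro member_le_sum sum_nonneg) auto
    finally show ?thesis .
  qed
  show thesis
  proof (rule that)
    show "C \<ge> 0" unfolding C_def by (intro sum_nonneg) simp
  next
    fix p m assume "p \<in> V"
    have "cmod (coeff (taylor r p) m)
        = cmod (\<Sum>k<cpoly.dim V. coeff (taylor r p) k * coeff (taylor r (P k)) m)"
      using arg_cong[OF taylor_eq_sum_taylor_basis[OF assms(1,3) \<open>p \<in> V\<close> P], of "\<lambda>q. coeff q m"]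
      by (simp only: coeff_sum coeff_smult)
    also have "\<dots> \<le> (\<Sum>k<cpoly.dim V. cmod (coeff (taylor r p) k) * C)"
      by (intro order_trans[OF norm_sum] sum_mono)
        (auto simp: norm_mult intro: mult_left_mono basis_bound)
    finally show "cmod (coeff (taylor r p) m) \<le> C * (\<Sum>k<cpoly.dim V. cmod (coeff (taylor r p) k))"
      by (simp add: sum_distrib_left mult.commute)
  qed
qed

lemma act_linear: "Vector_Spaces.linear smult smult (act d g)"
  by (cases g) (simp add: Vector_Spaces.linear_iff vector_space_smult act_def poly_eq_iff
      coeff_sum sum.distrib sum_distrib_left algebra_simps)

lemma act_image_subset_forms: "act d g ` X \<subseteq> forms d"
proof -
  obtain a b c e where g: "g = (a, b, c, e)" by (cases g)
  have "degree ([:b, a:] ^ k * [:e, c:] ^ (d - k)) \<le> d" if "k \<le> d" for k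
  proof -
    have "degree ([:b, a:] ^ k * [:e, c:] ^ (d - k)) \<le> degree [:b, a:] * k + degree [:e, c:] * (d - k)"
      by (intro order_trans[OF degree_mult_le] add_mono degree_power_le)
    also have "\<dots> \<le> 1 * k + 1 * (d - k)"
      by (intro add_mono mult_right_mono) auto
    finally show ?thesis using that by simp
  qed
  then show ?thesis
    by (auto simp: g act_def forms_def intro!: degree_sum_le order_trans[OF degree_smult_le])
qed

text \<open>The substitution \<open>x \<mapsto> s + t / (x - r)\<close>, written as a matrix.\<close>

definition moebius :: "complex \<Rightarrow> complex \<Rightarrow> complex \<Rightarrow> complex \<times> complex \<times> complex \<times> complex" where
  "moebius r s t = (s, t - s * r, 1, - r)"

lemma invertible2_moebius: "t \<noteq> 0 \<Longrightarrow> invertible2 (moebius r s t)"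
  by (simp add: invertible2_def moebius_def algebra_simps)

lemma taylor_act_moebius:
  assumes "degree q \<le> d"
  shows "taylor r (act d (moebius r s t) q) = (\<Sum>j\<le>d. monom (t ^ j * coeff (taylor s q) j) (d - j))"
proof (rule poly_eqI_nonzero)
  fix x :: complex assume "x \<noteq> 0"
  have hom: "x ^ d * y ^ k = (x * y) ^ k * x ^ (d - k)" if "k \<le> d" for y k
    using that by (simp add: power_mult_distrib power_add[symmetric])
  have "poly (taylor r (act d (moebius r s t) q)) x = (\<Sum>k\<le>d. coeff q k * ((t + s * x) ^ k * x ^ (d - k)))"
    by (simp add: poly_taylor act_def moebius_def poly_sum algebra_simps)
  also have "\<dots> = x ^ d * (\<Sum>k\<le>d. coeff q k * (s + t / x) ^ k)"
    using \<open>x \<noteq> 0\<close>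
    by (simp add: sum_distrib_left hom distrib_left mult.commute mult.left_commute add.commute[of t])
  also have "\<dots> = x ^ d * poly (taylor s q) (t / x)"
    using assms by (simp add: poly_taylor poly_eq_sum_upto)
  also have "\<dots> = (\<Sum>j\<le>d. coeff (taylor s q) j * (x ^ d * (t / x) ^ j))"
    using assms by (simp add: poly_eq_sum_upto[of _ d] degree_taylor sum_distrib_left mult.left_commute)
  also have "\<dots> = (\<Sum>j\<le>d. coeff (taylor s q) j * t ^ j * x ^ (d - j))"
    using \<open>x \<noteq> 0\<close> by (intro sum.cong refl) (simp add: hom)
  also have "\<dots> = poly (\<Sum>j\<le>d. monom (t ^ j * coeff (taylor s q) j) (d - j)) x"
    by (simp add: poly_sum poly_monom mult.commute)
  finally show "poly (taylor r (act d (moebius r s t) q)) x = poly (\<Sum>j\<le>d. monom (t ^ j * coeff (taylor s q) j) (d - j)) x" .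
qed

lemma coeff_taylor_act_moebius:
  assumes "degree q \<le> d"
  shows "coeff (taylor r (act d (moebius r s t) q)) m =
    (if m \<le> d then t ^ (d - m) * coeff (taylor s q) (d - m) else 0)"
proof (cases "m \<le> d")
  case True
  have "coeff (taylor r (act d (moebius r s t) q)) m
      = (\<Sum>j\<le>d. if j = d - m then t ^ j * coeff (taylor s q) j else 0)"
    unfolding taylor_act_moebius[OF assms] coeff_sum coeff_monom
    using True by (intro sum.cong refl) auto
  then show ?thesis
    using True by simp
next
  case False
  then show ?thesis
    unfolding taylor_act_moebius[OF assms] coeff_sum coeff_monom by (auto intro: sum.neutral)
qed

lemma inj_on_act_moebius:
  assumes "t \<noteq> 0"
  shows "inj_on (act d (moebius r s t)) (forms d)"
proof -
  interpret act: Vector_Spaces.linear smult smult "act d (moebius r s t)"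
    by (rule act_linear)
  have "q = 0" if "q \<in> forms d" "act d (moebius r s t) q = 0" for q
  proof -
    have "coeff (taylor s q) j = 0" for j
    proof (cases "j \<le> d")
      case True
      then have "t ^ j * coeff (taylor s q) j = 0"
        using coeff_taylor_act_moebius[of q d r s t "d - j"] that by (simp add: forms_def)
      then show ?thesis using assms by simp
    next
      case False
      then show ?thesis
        using that(1) by (intro coeff_eq_0) (simp add: forms_def degree_taylor)
    qed
    then show "q = 0"
      using taylor_eq_0_iff poly_eqI by (metis coeff_0)
  qed
  then show ?thesis
    using act.inj_on_iff_eq_0[OF subspace_forms] by blast
qed

lemma dim_act_moebius:
  assumes "t \<noteq> 0" "cpoly.subspace X" "X \<subseteq> forms d"
  shows "cpoly.dim (act d (moebius r s t) ` X) = cpoly.dim X"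
  using assms inj_on_subset[OF inj_on_act_moebius[OF assms(1)] assms(3)]
    order_trans[OF assms(3) forms_subset_span_monoms]
  by (intro cpoly.dim_image_eq_of_inj_on[OF act_linear]) auto

lemma taylor_coeff_act_moebius_le:
  fixes t :: real and r :: complex
  assumes "degree q \<le> d" "0 < t" "t \<le> 1" "k + w \<le> d" "CW \<ge> 0"
    and bound: "\<And>m. cmod (coeff (taylor s q) m) \<le> CW * (\<Sum>l<w. cmod (coeff (taylor s q) l))"
  defines "F \<equiv> act d (moebius r s (of_real t)) q"
  shows "cmod (coeff (taylor r F) k) \<le> CW * t * (\<Sum>l<w. cmod (coeff (taylor r F) (d - l)))"
proof -
  define R where "R l = cmod (coeff (taylor s q) l)" for l
  have top_coeff: "cmod (coeff (taylor r F) (d - l)) = t ^ l * R l" if "l \<le> d" for l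
    using that assms(1,2)
    by (simp add: F_def R_def coeff_taylor_act_moebius norm_mult norm_power)
  have "cmod (coeff (taylor r F) k) = t ^ (d - k) * R (d - k)"
    using top_coeff[of "d - k"] assms(4) by simp
  also have "\<dots> \<le> t ^ (d - k) * (CW * (\<Sum>l<w. R l))"
    unfolding R_def using assms(2) by (intro mult_left_mono bound) simp
  also have "\<dots> = CW * (\<Sum>l<w. t ^ (d - k - l) * cmod (coeff (taylor r F) (d - l)))"
  proof -
    have "t ^ (d - k) * R l = t ^ (d - k - l) * cmod (coeff (taylor r F) (d - l))" if "l < w" for l
      using top_coeff[of l] that assms(4) by (simp add: power_add[symmetric] mult.assoc)
    then show ?thesis
      by (simp add: sum_distrib_left mult.left_commute)
  qed
  also have "\<dots> \<le> CW * (\<Sum>l<w. t * cmod (coeff (taylor r F) (d - l)))"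
  proof (intro mult_left_mono sum_mono assms(5))
    fix l assume "l \<in> {..<w}"
    then have "t ^ (d - k - l) \<le> t ^ 1"
      using assms(2-4) by (intro power_decreasing) auto
    then show "t ^ (d - k - l) * cmod (coeff (taylor r F) (d - l)) \<le> t * cmod (coeff (taylor r F) (d - l))"
      by (simp add: mult_right_mono)
  qed
  finally show ?thesis
    by (simp add: sum_distrib_left mult.assoc)
qed

lemma moebius_transversal:
  assumes V: "cpoly.subspace V" "V \<subseteq> forms d" "generic_point V r"
    and W: "cpoly.subspace W" "W \<subseteq> forms d" "generic_point W s"
    and dims: "cpoly.dim V + cpoly.dim W \<le> Suc d"
  obtains t where "t \<noteq> 0" "V \<inter> act d (moebius r s t) ` W \<subseteq> {0}"
proof -
  define v where "v = cpoly.dim V"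
  define w where "w = cpoly.dim W"
  obtain CV where CV: "CV \<ge> 0"
    "\<And>p m. p \<in> V \<Longrightarrow> cmod (coeff (taylor r p) m) \<le> CV * (\<Sum>k<v. cmod (coeff (taylor r p) k))"
    using taylor_coeff_bound[OF V] unfolding v_def by metis
  obtain CW where CW: "CW \<ge> 0"
    "\<And>q m. q \<in> W \<Longrightarrow> cmod (coeff (taylor s q) m) \<le> CW * (\<Sum>l<w. cmod (coeff (taylor s q) l))"
    using taylor_coeff_bound[OF W] unfolding w_def by metis
  define eps where "eps = v * w * CV * CW"
  have "eps \<ge> 0"
    using CV(1) CW(1) by (simp add: eps_def)
  define t where "t = 1 / (eps + 1)"
  have t: "0 < t" "t \<le> 1" "t * eps < 1"
    using \<open>eps \<ge> 0\<close> by (simp_all add: t_def field_simps)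
  have "F = 0" if "q \<in> W" "F = act d (moebius r s (of_real t)) q" "F \<in> V" for F q
  proof -
    define a where "a m = cmod (coeff (taylor r F) m)" for m
    define A where "A = (\<Sum>k<v. a k)"
    define B where "B = (\<Sum>l<w. a (d - l))"
    have "degree q \<le> d"
      using that(1) W(2) by (auto simp: forms_def)
    have "A \<ge> 0"
      by (auto simp: A_def a_def intro: sum_nonneg)
    have "B \<le> (\<Sum>l<w. CV * A)"
      unfolding B_def A_def a_def by (intro sum_mono CV(2) \<open>F \<in> V\<close>)
    then have "B \<le> w * CV * A"
      by simp
    have "A \<le> (\<Sum>k<v. CW * t * B)"
      unfolding A_def B_def a_def that(2) using dims t(1,2) CW \<open>q \<in> W\<close> \<open>degree q \<le> d\<close>
      by (intro sum_mono taylor_coeff_act_moebius_le) (auto simp: v_def w_def)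
    also have "\<dots> \<le> v * (CW * t * (w * CV * A))"
      using \<open>B \<le> w * CV * A\<close> CW(1) t(1) by (simp add: mult_left_mono)
    also have "\<dots> = (t * eps) * A"
      by (simp add: eps_def algebra_simps)
    finally have "A = 0"
      using t(3) \<open>A \<ge> 0\<close> by (metis mult_le_cancel_right1 nle_le not_less)
    then have "\<forall>k<v. coeff (taylor r F) k = 0"
      unfolding A_def a_def by (simp add: sum_nonneg_eq_0_iff)
    then show "F = 0"
      using V(3) \<open>F \<in> V\<close> by (simp add: generic_point_def linear_power_dvd_iff_taylor v_def)
  qed
  then show thesis
    using that[of "of_real t"] t(1) by auto
qed

lemma exists_moebius_transversal:
  assumes "cpoly.subspace V" "V \<subseteq> forms d" "cpoly.subspace W" "W \<subseteq> forms d"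
    and "cpoly.dim V + cpoly.dim W \<le> Suc d"
  obtains r s t where "t \<noteq> 0" "V \<inter> act d (moebius r s t) ` W \<subseteq> {0}"
proof -
  obtain r where "generic_point V r"
    using generic_point_exists[OF assms(1,2)] .
  moreover obtain s where "generic_point W s"
    using generic_point_exists[OF assms(3,4)] .
  ultimately show thesis
    using moebius_transversal[OF assms(1,2) _ assms(3,4) _ assms(5)] that by metis
qed

lemma exists_moebius_Int_dim:
  assumes V: "cpoly.subspace V" "V \<subseteq> forms d" and W: "cpoly.subspace W" "W \<subseteq> forms d"
    and "Suc d \<le> cpoly.dim V + cpoly.dim W"
  obtains g where "invertible2 g" "cpoly.dim (V \<inter> act d g ` W) + Suc d = cpoly.dim V + cpoly.dim W"
proof -
  have "cpoly.dim V \<le> Suc d"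
    using dim_le_if_subset_forms[OF V(2)] .
  moreover have "Suc d - cpoly.dim V \<le> cpoly.dim W"
    using assms(5) by simp
  ultimately obtain W' where W': "cpoly.subspace W'" "W' \<subseteq> W" "cpoly.dim W' = Suc d - cpoly.dim V"
    using cpoly.subspace_with_dim[OF W(1) finite_imageI[OF finite_atMost]
        order_trans[OF W(2) forms_subset_span_monoms]]
    by blast
  have W'_small: "W' \<subseteq> forms d" "cpoly.dim V + cpoly.dim W' \<le> Suc d"
    using W' W(2) \<open>cpoly.dim V \<le> Suc d\<close> by auto
  obtain r s t where t: "t \<noteq> 0" "V \<inter> act d (moebius r s t) ` W' \<subseteq> {0}"
    by (rule exists_moebius_transversal[OF V W'(1) W'_small])
  interpret act: Vector_Spaces.linear smult smult "act d (moebius r s t)"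
    by (rule act_linear)
  have "V \<union> act d (moebius r s t) ` W \<subseteq> forms d"
    using V(2) act_image_subset_forms by blast
  moreover have "cpoly.dim (forms d) \<le> cpoly.dim V + cpoly.dim (act d (moebius r s t) ` W')"
    using dim_le_if_subset_forms[of "forms d" d] W'(3) \<open>cpoly.dim V \<le> Suc d\<close>
    by (simp add: dim_act_moebius[OF t(1) W'(1) W'_small(1)])
  ultimately have "cpoly.dim (V \<inter> act d (moebius r s t) ` W) + cpoly.dim (act d (moebius r s t) ` W')
      = cpoly.dim (act d (moebius r s t) ` W)"
    by (rule cpoly.dim_Int_add_dim_complement_of_dim_le[OF V(1) act.subspace_image[OF W(1)]
          act.subspace_image[OF W'(1)] image_mono[OF W'(2)] t(2) subspace_forms _
          finite_imageI[OF finite_atMost] forms_subset_span_monoms])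
  then have "cpoly.dim (V \<inter> act d (moebius r s t) ` W) + cpoly.dim W' = cpoly.dim W"
    by (simp add: dim_act_moebius[OF t(1) W'(1) W'_small(1)] dim_act_moebius[OF t(1) W])
  then show thesis
    using that[of "moebius r s t"] invertible2_moebius[OF t(1)] W'(3) \<open>cpoly.dim V \<le> Suc d\<close>
    by simp
qed

theorem proposition3p1:
  fixes d :: nat and V W :: "complex poly set"
  assumes "d \<ge> 1"
    and "nonempty_proj_subspace d V"
    and "nonempty_proj_subspace d W"
  shows "\<exists>g. invertible2 g \<and>
           pdim (V \<inter> act d g ` W) = max (-1) (pdim V + pdim W - int d)"
proof -
  have V: "cpoly.subspace V" "V \<subseteq> forms d" and W: "cpoly.subspace W" "W \<subseteq> forms d"
    using assms(2,3) subspace_if_lin_subspace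
    by (auto simp: nonempty_proj_subspace_def lin_subspace_def)
  show ?thesis
  proof (cases "cpoly.dim V + cpoly.dim W \<le> Suc d")
    case True
    obtain r s t where t: "t \<noteq> 0" "V \<inter> act d (moebius r s t) ` W \<subseteq> {0}"
      using exists_moebius_transversal[OF V W True] .
    then have "cpoly.dim (V \<inter> act d (moebius r s t) ` W) = 0"
      using cpoly.dim_le_card[of _ "{}"] by auto
    then show ?thesis
      using invertible2_moebius[OF t(1)] True by (intro exI[of _ "moebius r s t"]) (simp add: pdim_def)
  next
    case False
    then have "Suc d \<le> cpoly.dim V + cpoly.dim W"
      by simp
    then obtain g where "invertible2 g" "cpoly.dim (V \<inter> act d g ` W) + Suc d = cpoly.dim V + cpoly.dim W"
      using exists_moebius_Int_dim[OF V W] by blast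
    then show ?thesis
      using False by (intro exI[of _ g]) (simp add: pdim_def)
  qed
qed

end
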